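(* Let $S=(s_{jl})\in\mathbb{C}^{4\times4}$ be Hermitian and $\varepsilon\in\{1,-1\}$. The multiset of roots (counted with multiplicity) of the quadratic polynomial $d\mapsto d^2+2p(\theta_1,\theta_2)\,d+q(\theta_1,\theta_2)$ is independent of $(\theta_1,\theta_2)\in(-\pi,\pi]^2$ if and only if $s_{12}=s_{34}=0$ and at most one of the four numbers $s_{13},s_{14},s_{23},s_{24}$ is nonzero.
   Context: Let $S=(s_{jl})_{j,l=1}^4$ be a Hermitian $4\times4$ complex matrix (so $s_{jj}\in\mathbb{R}$ and $s_{lj}=\overline{s_{jl}}$) and $\varepsilon\in\{1,-1\}$. For $\theta_1,\theta_2\in\mathbb{R}$ define $$p=-\tfrac12\Big[s_{11}+s_{22}+s_{33}+s_{44}+2\varepsilon\operatorname{Re}(s_{12}\mathrm{e}^{i\theta_1})+2\varepsilon\operatorname{Re}(s_{34}\mathrm{e}^{i\theta_2})\Big],$$ $$\begin{aligned}q={}&-\big(|s_{13}|^2-s_{11}s_{33}+|s_{14}|^2-s_{11}s_{44}+|s_{23}|^2-s_{22}s_{33}+|s_{24}|^2-s_{22}s_{44}\big)\\&-2\varepsilon\Big[-(s_{33}+s_{44})\operatorname{Re}(s_{12}\mathrm{e}^{i\theta_1})+\operatorname{Re}\big((s_{13}\overline{s_{23}}+s_{14}\overline{s_{24}})\mathrm{e}^{i\theta_1}\big)\\&\qquad-(s_{11}+s_{22})\operatorname{Re}(s_{34}\mathrm{e}^{i\theta_2})+\operatorname{Re}\big((\overline{s_{13}}s_{14}+\overline{s_{23}}s_{24})\mathrm{e}^{i\theta_2}\big)\Big]\\&-2\operatorname{Re}\big((s_{14}\overline{s_{23}}-s_{12}s_{34})\mathrm{e}^{i(\theta_1+\theta_2)}\big)-2\operatorname{Re}\big((s_{13}\overline{s_{24}}-s_{12}\overline{s_{34}})\mathrm{e}^{i(\theta_1-\theta_2)}\big).\end{aligned}$$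 *)

theory Defs
  imports Complex_Main "HOL-Computational_Algebra.Polynomial" "HOL-Library.Multiset"
begin

text \<open>A 4x4 complex matrix is represented by its entries s j l for j, l in {1..4}.\<close>

definition hermitian4 :: "(nat \<Rightarrow> nat \<Rightarrow> complex) \<Rightarrow> bool" where
  "hermitian4 s \<longleftrightarrow> (\<forall>j\<in>{1..4}. \<forall>l\<in>{1..4}. s l j = cnj (s j l))"

definition pfun :: "(nat \<Rightarrow> nat \<Rightarrow> complex) \<Rightarrow> real \<Rightarrow> real \<Rightarrow> real \<Rightarrow> real" where
  "pfun s \<epsilon> \<theta>1 \<theta>2 = - (1/2) * (Re (s 1 1) + Re (s 2 2) + Re (s 3 3) + Re (s 4 4)
     + 2 * \<epsilon> * Re (s 1 2 * exp (\<i> * of_real \<theta>1))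
     + 2 * \<epsilon> * Re (s 3 4 * exp (\<i> * of_real \<theta>2)))"

definition qfun :: "(nat \<Rightarrow> nat \<Rightarrow> complex) \<Rightarrow> real \<Rightarrow> real \<Rightarrow> real \<Rightarrow> real" where
  "qfun s \<epsilon> \<theta>1 \<theta>2 =
     - ((cmod (s 1 3))\<^sup>2 - Re (s 1 1) * Re (s 3 3) + (cmod (s 1 4))\<^sup>2 - Re (s 1 1) * Re (s 4 4)
        + (cmod (s 2 3))\<^sup>2 - Re (s 2 2) * Re (s 3 3) + (cmod (s 2 4))\<^sup>2 - Re (s 2 2) * Re (s 4 4))
     - 2 * \<epsilon> * ( - (Re (s 3 3) + Re (s 4 4)) * Re (s 1 2 * exp (\<i> * of_real \<theta>1))
         + Re ((s 1 3 * cnj (s 2 3) + s 1 4 * cnj (s 2 4)) * exp (\<i> * of_real \<theta>1))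
         - (Re (s 1 1) + Re (s 2 2)) * Re (s 3 4 * exp (\<i> * of_real \<theta>2))
         + Re ((cnj (s 1 3) * s 1 4 + cnj (s 2 3) * s 2 4) * exp (\<i> * of_real \<theta>2)))
     - 2 * Re ((s 1 4 * cnj (s 2 3) - s 1 2 * s 3 4) * exp (\<i> * of_real (\<theta>1 + \<theta>2)))
     - 2 * Re ((s 1 3 * cnj (s 2 4) - s 1 2 * cnj (s 3 4)) * exp (\<i> * of_real (\<theta>1 - \<theta>2)))"

definition quad_poly :: "(nat \<Rightarrow> nat \<Rightarrow> complex) \<Rightarrow> real \<Rightarrow> real \<Rightarrow> real \<Rightarrow> complex poly" where
  "quad_poly s \<epsilon> \<theta>1 \<theta>2 =
     [: complex_of_real (qfun s \<epsilon> \<theta>1 \<theta>2), 2 * complex_of_real (pfun s \<epsilon> \<theta>1 \<theta>2), 1 :]"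

text \<open>Multiset of (complex) roots of a nonzero polynomial, counted with multiplicity.\<close>
definition root_mset :: "complex poly \<Rightarrow> complex multiset" where
  "root_mset P = Abs_multiset (\<lambda>z. order z P)"

end

theory Submission
  imports Defs "HOL-Computational_Algebra.Fundamental_Theorem_Algebra"
begin

(*
  A nonzero complex polynomial is determined by its leading coefficient
  and its multiset of roots, so the roots of the monic quadratic d^2 + 2 p d + q are
  independent of (theta1, theta2) exactly when p and q are both constant.  Both p and q
  are, up to additive constants and nonzero factors, trigonometric polynomials
    Re (a e^{i x}) + Re (b e^{i y}) + Re (c e^{i (x+y)}) + Re (d e^{i (x-y)})
  in x = theta1, y = theta2, and such an expression is constant on (-pi,pi]^2 only if
  a = b = c = d = 0 (evaluate at finitely many points).  For p the coefficients are
  eps s12 and eps s34; once these vanish, the coefficients of q are four products of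
  s13, s14, s23, s24, which vanish together iff at most one of these four entries is
  nonzero.  The file proves these three ingredients (roots determine monic polynomials,
  rigidity of the trigonometric form, the vanishing-products criterion) and then
  derives the theorem by chaining the resulting equivalences.
*)

text \<open>For a nonzero polynomial the multiplicity function is finitely supported, so
  root_mset P coincides with the library's multiset of roots proots P.\<close>

lemma root_mset_eq_proots:
  assumes "P \<noteq> 0"
  shows "root_mset P = proots P"
proof (rule multiset_eqI)
  fix z
  have "{x. 0 < order x P} \<subseteq> {x. poly P x = 0}"
    using assms order_root by auto
  then have "finite {x. 0 < order x P}"
    using poly_roots_finite[OF assms] finite_subset by blast
  then show "count (root_mset P) z = count (proots P) z"
    unfolding root_mset_def using assms by (simp add: count_Abs_multiset)
qed

text \<open>Over the complex numbers a polynomial splits as its leading coefficient times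
  the product of the linear factors of its roots, hence it is determined by these data.\<close>

lemma root_mset_determines_poly:
  fixes P Q :: "complex poly"
  assumes "P \<noteq> 0" "Q \<noteq> 0" "lead_coeff P = lead_coeff Q"
    and "root_mset P = root_mset Q"
  shows "P = Q"
proof -
  have "proots P = proots Q"
    using assms(4) by (simp add: root_mset_eq_proots assms(1,2))
  then show ?thesis
    using complex_poly_decompose_multiset[of P] complex_poly_decompose_multiset[of Q] assms(3)
    by metis
qed

lemma quad_poly_eq_iff:
  "quad_poly s \<epsilon> \<theta>1 \<theta>2 = quad_poly s \<epsilon> \<phi>1 \<phi>2 \<longleftrightarrow>
   pfun s \<epsilon> \<theta>1 \<theta>2 = pfun s \<epsilon> \<phi>1 \<phi>2 \<and> qfun s \<epsilon> \<theta>1 \<theta>2 = qfun s \<epsilon> \<phi>1 \<phi>2"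
  by (auto simp: quad_poly_def)

lemma root_mset_quad_poly_eq_iff:
  "root_mset (quad_poly s \<epsilon> \<theta>1 \<theta>2) = root_mset (quad_poly s \<epsilon> \<phi>1 \<phi>2) \<longleftrightarrow>
   pfun s \<epsilon> \<theta>1 \<theta>2 = pfun s \<epsilon> \<phi>1 \<phi>2 \<and> qfun s \<epsilon> \<theta>1 \<theta>2 = qfun s \<epsilon> \<phi>1 \<phi>2"
proof -
  have monic: "quad_poly s \<epsilon> x y \<noteq> 0" "lead_coeff (quad_poly s \<epsilon> x y) = 1" for x y
    by (simp_all add: quad_poly_def)
  have "root_mset (quad_poly s \<epsilon> \<theta>1 \<theta>2) = root_mset (quad_poly s \<epsilon> \<phi>1 \<phi>2) \<longleftrightarrow>
        quad_poly s \<epsilon> \<theta>1 \<theta>2 = quad_poly s \<epsilon> \<phi>1 \<phi>2"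
    using root_mset_determines_poly[OF monic(1) monic(1)] monic(2) by metis
  then show ?thesis
    unfolding quad_poly_eq_iff .
qed

definition trig_form :: "complex \<Rightarrow> complex \<Rightarrow> complex \<Rightarrow> complex \<Rightarrow> real \<Rightarrow> real \<Rightarrow> real" where
  "trig_form a b c d x y =
     Re (a * cis x) + Re (b * cis y) + Re (c * cis (x + y)) + Re (d * cis (x - y))"

lemma Re_mult_cis: "Re (z * cis t) = Re z * cos t - Im z * sin t"
  by simp

text \<open>A trigonometric form that is constant on (-pi,pi]^2 has only zero coefficients:
  evaluating at points with coordinates in {0, pi, pi/2, -pi/2} isolates the real and
  imaginary part of every coefficient.\<close>

lemma trig_form_constant_iff:
  "(\<forall>x\<in>{-pi<..pi}. \<forall>y\<in>{-pi<..pi}. trig_form a b c d x y = trig_form a b c d 0 0)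
   \<longleftrightarrow> a = 0 \<and> b = 0 \<and> c = 0 \<and> d = 0"
proof
  assume const: "\<forall>x\<in>{-pi<..pi}. \<forall>y\<in>{-pi<..pi}. trig_form a b c d x y = trig_form a b c d 0 0"
  have expanded: "Re a * cos x - Im a * sin x + (Re b * cos y - Im b * sin y)
     + (Re c * (cos x * cos y - sin x * sin y) - Im c * (sin x * cos y + cos x * sin y))
     + (Re d * (cos x * cos y + sin x * sin y) - Im d * (sin x * cos y - cos x * sin y))
     = Re a + Re b + Re c + Re d" if "x \<in> {-pi<..pi}" "y \<in> {-pi<..pi}" for x y
    using const that unfolding trig_form_def Re_mult_cis
    by (simp add: cos_add sin_add cos_diff sin_diff)
  have pts: "0 \<in> {-pi<..pi}" "pi \<in> {-pi<..pi}" "pi/2 \<in> {-pi<..pi}" "-(pi/2) \<in> {-pi<..pi}"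
    using pi_gt_zero by (auto simp: greaterThanAtMost_iff; linarith)+
  note samples = expanded[OF pts(1) pts(2)] expanded[OF pts(2) pts(1)] expanded[OF pts(2) pts(2)]
     expanded[OF pts(1) pts(3)] expanded[OF pts(1) pts(4)] expanded[OF pts(3) pts(1)]
     expanded[OF pts(4) pts(1)] expanded[OF pts(3) pts(3)] expanded[OF pts(3) pts(4)]
     expanded[OF pts(4) pts(3)] expanded[OF pts(4) pts(4)] expanded[OF pts(2) pts(3)]
     expanded[OF pts(3) pts(2)]
  have "Re a = 0" "Im a = 0" "Re b = 0" "Im b = 0" "Re c = 0" "Im c = 0" "Re d = 0" "Im d = 0"
    using samples by simp_all
  then show "a = 0 \<and> b = 0 \<and> c = 0 \<and> d = 0"
    by (simp add: complex_eq_iff)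
qed (simp add: trig_form_def)

lemma exp_i_eq_cis: "exp (\<i> * complex_of_real t) = cis t"
  by (simp add: cis_conv_exp)

lemma pfun_diff:
  "pfun s \<epsilon> x y - pfun s \<epsilon> x' y' =
     trig_form (\<epsilon> * s 1 2) (\<epsilon> * s 3 4) 0 0 x' y' - trig_form (\<epsilon> * s 1 2) (\<epsilon> * s 3 4) 0 0 x y"
  unfolding pfun_def trig_form_def exp_i_eq_cis by (simp add: algebra_simps)

lemma Re_scaled_diff_mult_cis:
  fixes \<epsilon> r :: real and u v :: complex
  shows "Re ((\<epsilon> * (u - r * v)) * cis t) = \<epsilon> * (Re (u * cis t) - r * Re (v * cis t))"
  by (simp add: algebra_simps)

lemma qfun_diff:
  fixes s :: "nat \<Rightarrow> nat \<Rightarrow> complex" and \<epsilon> :: real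
  defines "a \<equiv> \<epsilon> * (s 1 3 * cnj (s 2 3) + s 1 4 * cnj (s 2 4) - (Re (s 3 3) + Re (s 4 4)) * s 1 2)"
    and "b \<equiv> \<epsilon> * (cnj (s 1 3) * s 1 4 + cnj (s 2 3) * s 2 4 - (Re (s 1 1) + Re (s 2 2)) * s 3 4)"
    and "c \<equiv> s 1 4 * cnj (s 2 3) - s 1 2 * s 3 4"
    and "d \<equiv> s 1 3 * cnj (s 2 4) - s 1 2 * cnj (s 3 4)"
  shows "qfun s \<epsilon> x y - qfun s \<epsilon> x' y' = 2 * (trig_form a b c d x' y' - trig_form a b c d x y)"
  unfolding qfun_def trig_form_def exp_i_eq_cis a_def b_def c_def d_def Re_scaled_diff_mult_cis
  by algebra

lemma pq_constant_iff:
  fixes s :: "nat \<Rightarrow> nat \<Rightarrow> complex" and \<epsilon> :: real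
  assumes "\<epsilon> \<noteq> 0"
  shows "(\<forall>x\<in>{-pi<..pi}. \<forall>y\<in>{-pi<..pi}.
            pfun s \<epsilon> x y = pfun s \<epsilon> 0 0 \<and> qfun s \<epsilon> x y = qfun s \<epsilon> 0 0)
     \<longleftrightarrow> s 1 2 = 0 \<and> s 3 4 = 0 \<and>
         s 1 3 * cnj (s 2 3) + s 1 4 * cnj (s 2 4) = 0 \<and> cnj (s 1 3) * s 1 4 + cnj (s 2 3) * s 2 4 = 0 \<and>
         s 1 4 * cnj (s 2 3) = 0 \<and> s 1 3 * cnj (s 2 4) = 0"
proof -
  define a where "a = \<epsilon> * (s 1 3 * cnj (s 2 3) + s 1 4 * cnj (s 2 4) - (Re (s 3 3) + Re (s 4 4)) * s 1 2)"
  define b where "b = \<epsilon> * (cnj (s 1 3) * s 1 4 + cnj (s 2 3) * s 2 4 - (Re (s 1 1) + Re (s 2 2)) * s 3 4)"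
  define c where "c = s 1 4 * cnj (s 2 3) - s 1 2 * s 3 4"
  define d where "d = s 1 3 * cnj (s 2 4) - s 1 2 * cnj (s 3 4)"
  have "pfun s \<epsilon> x y = pfun s \<epsilon> 0 0 \<longleftrightarrow>
        trig_form (\<epsilon> * s 1 2) (\<epsilon> * s 3 4) 0 0 x y = trig_form (\<epsilon> * s 1 2) (\<epsilon> * s 3 4) 0 0 0 0" for x y
    using pfun_diff[of s \<epsilon> x y 0 0] by linarith
  then have p_const: "(\<forall>x\<in>{-pi<..pi}. \<forall>y\<in>{-pi<..pi}. pfun s \<epsilon> x y = pfun s \<epsilon> 0 0)
                      \<longleftrightarrow> s 1 2 = 0 \<and> s 3 4 = 0"
    using trig_form_constant_iff[of "\<epsilon> * s 1 2" "\<epsilon> * s 3 4" 0 0] assms by simp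
  have "qfun s \<epsilon> x y = qfun s \<epsilon> 0 0 \<longleftrightarrow> trig_form a b c d x y = trig_form a b c d 0 0" for x y
    using qfun_diff[of s \<epsilon> x y 0 0, folded a_def b_def c_def d_def] by auto
  then have q_const: "(\<forall>x\<in>{-pi<..pi}. \<forall>y\<in>{-pi<..pi}. qfun s \<epsilon> x y = qfun s \<epsilon> 0 0)
                      \<longleftrightarrow> a = 0 \<and> b = 0 \<and> c = 0 \<and> d = 0"
    using trig_form_constant_iff[of a b c d] by simp
  have "(\<forall>x\<in>{-pi<..pi}. \<forall>y\<in>{-pi<..pi}.
            pfun s \<epsilon> x y = pfun s \<epsilon> 0 0 \<and> qfun s \<epsilon> x y = qfun s \<epsilon> 0 0)
        \<longleftrightarrow> (s 1 2 = 0 \<and> s 3 4 = 0) \<and> a = 0 \<and> b = 0 \<and> c = 0 \<and> d = 0"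
    unfolding ball_conj_distrib p_const q_const ..
  also have "\<dots> \<longleftrightarrow> (s 1 2 = 0 \<and> s 3 4 = 0) \<and>
         s 1 3 * cnj (s 2 3) + s 1 4 * cnj (s 2 4) = 0 \<and> cnj (s 1 3) * s 1 4 + cnj (s 2 3) * s 2 4 = 0 \<and>
         s 1 4 * cnj (s 2 3) = 0 \<and> s 1 3 * cnj (s 2 4) = 0"
    by (rule conj_cong[OF refl]) (simp add: a_def b_def c_def d_def assms)
  finally show ?thesis
    by (simp only: conj_assoc)
qed

lemma card_nonzero_le_one_iff:
  assumes "finite I"
  shows "card {i \<in> I. f i \<noteq> 0} \<le> 1 \<longleftrightarrow> (\<forall>i\<in>I. \<forall>j\<in>I. i \<noteq> j \<longrightarrow> f i = 0 \<or> f j = 0)"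
  using card_le_Suc0_iff_eq[of "{i \<in> I. f i \<noteq> 0}"] assms by auto

lemma card_coupling_entries_le_one_iff:
  fixes s :: "nat \<Rightarrow> nat \<Rightarrow> complex"
  shows "card {z \<in> {(1::nat,3::nat), (1,4), (2,3), (2,4)}. s (fst z) (snd z) \<noteq> 0} \<le> 1 \<longleftrightarrow>
    (s 1 3 = 0 \<or> s 1 4 = 0) \<and> (s 1 3 = 0 \<or> s 2 3 = 0) \<and> (s 1 3 = 0 \<or> s 2 4 = 0) \<and>
    (s 1 4 = 0 \<or> s 2 3 = 0) \<and> (s 1 4 = 0 \<or> s 2 4 = 0) \<and> (s 2 3 = 0 \<or> s 2 4 = 0)"
  by (subst card_nonzero_le_one_iff) auto

text \<open>The four entry products in q vanish iff at most one of the four entries is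
  nonzero: the products b cnj(c) and a cnj(d) kill two pairs directly, and the two
  sums then force the remaining pairs to vanish.\<close>

lemma entry_products_vanish_iff:
  fixes a b c d :: complex
  shows "(a * cnj c + b * cnj d = 0 \<and> cnj a * b + cnj c * d = 0 \<and> b * cnj c = 0 \<and> a * cnj d = 0)
     \<longleftrightarrow> (a = 0 \<or> b = 0) \<and> (a = 0 \<or> c = 0) \<and> (a = 0 \<or> d = 0) \<and>
         (b = 0 \<or> c = 0) \<and> (b = 0 \<or> d = 0) \<and> (c = 0 \<or> d = 0)"
  by auto

text \<open>Since 0 lies in the parameter interval, the roots are independent of the
  parameters iff p and q take their values at the origin everywhere.\<close>

lemma isospectral_iff_pq_constant:
  "(\<forall>\<theta>1 \<theta>2 \<phi>1 \<phi>2.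
      \<theta>1 \<in> {-pi<..pi} \<and> \<theta>2 \<in> {-pi<..pi} \<and> \<phi>1 \<in> {-pi<..pi} \<and> \<phi>2 \<in> {-pi<..pi} \<longrightarrow>
      root_mset (quad_poly s \<epsilon> \<theta>1 \<theta>2) = root_mset (quad_poly s \<epsilon> \<phi>1 \<phi>2))
   \<longleftrightarrow> (\<forall>x\<in>{-pi<..pi}. \<forall>y\<in>{-pi<..pi}.
          pfun s \<epsilon> x y = pfun s \<epsilon> 0 0 \<and> qfun s \<epsilon> x y = qfun s \<epsilon> 0 0)"
  (is "?isospectral \<longleftrightarrow> ?constant")
proof
  assume ?isospectral
  then show ?constant
    unfolding root_mset_quad_poly_eq_iff by simp
next
  assume ?constant
  then show ?isospectral
    unfolding root_mset_quad_poly_eq_iff by (metis (no_types, lifting))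
qed

theorem mainTheorem13:
  fixes s :: "nat \<Rightarrow> nat \<Rightarrow> complex" and \<epsilon> :: real
  assumes "hermitian4 s" and "\<epsilon> \<in> {1, -1}"
  shows "(\<forall>\<theta>1 \<theta>2 \<phi>1 \<phi>2.
            \<theta>1 \<in> {-pi<..pi} \<and> \<theta>2 \<in> {-pi<..pi} \<and> \<phi>1 \<in> {-pi<..pi} \<and> \<phi>2 \<in> {-pi<..pi} \<longrightarrow>
            root_mset (quad_poly s \<epsilon> \<theta>1 \<theta>2) = root_mset (quad_poly s \<epsilon> \<phi>1 \<phi>2))
     \<longleftrightarrow> (s 1 2 = 0 \<and> s 3 4 = 0 \<and>
          card {z \<in> {(1::nat,3::nat), (1,4), (2,3), (2,4)}. s (fst z) (snd z) \<noteq> 0} \<le> 1)"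
proof -
  have "\<epsilon> \<noteq> 0"
    using assms(2) by auto
  show ?thesis
    unfolding isospectral_iff_pq_constant pq_constant_iff[OF \<open>\<epsilon> \<noteq> 0\<close>]
      card_coupling_entries_le_one_iff entry_products_vanish_iff
    by (rule refl)
qed

end
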